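(* Let $P$ be a probability distribution on a measurable space $\Omega$, let $\mathcal{Y}\subset\mathbb{R}^n$, and for each $y\in\mathcal{Y}$ let $G(y)\subset\Omega$ be a measurable set (the set $\{(y,\omega):\omega\in G(y)\}$ being jointly measurable), and put $\epsilon(y)=1-P(G(y))$. Fix $\epsilon,\delta\in(0,1)$ and positive numbers $\kappa_1,\kappa_2,\dots$ with $\sum_{s\geq1}\kappa_s^{-1}\leq 1$, and integers $N_s\geq \ln(\kappa_s/\delta)/\epsilon$. Consider a randomized procedure which at steps $s=1,2,\dots$ chooses a point $y^s\in\mathcal{Y}$ as a measurable deterministic function of all samples drawn at the steps preceding $s$, then draws $N_s$ samples $\omega^1_s,\dots,\omega^{N_s}_s$ from $P$, independent of each other and of all previously drawn samples, and stops with output $y^s$ if $\omega^\ell_s\in G(y^s)$ for all $\ell\leq N_s$ (otherwise it proceeds to step $s+1$, or may stop without output). Then the probability of the event "the procedure stops at some step $s$ with output $y^s$ satisfying $\epsilon(y^s)\geq\epsilon$" is at most $\delta$.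
   Context: In the application, $\omega=\xi^K$ is the random data trajectory and $G(y)$ is the set of realizations for which, for every $t\leq K$, there exists $x_t$ with $(y,x_t)\in\mathcal{Z}^t_{\xi_t}$; a point $y$ with $\epsilon(y)\leq\epsilon$ is then called $(1-\epsilon)$-implementable. A typical choice is $\kappa_s=s^2\sum_{r\geq1}r^{-2}$ and $N_s$ the smallest integer strictly greater than $\ln(\kappa_s/\delta)/\epsilon$. *)

theory Defs
  imports "HOL-Probability.Probability"
begin

text \<open>Sample trajectory: a function on index pairs (s,l); sample l (1 \<le> l \<le> N s) drawn at step s (s \<ge> 1).\<close>

definition step_idx :: "(nat \<Rightarrow> nat) \<Rightarrow> nat \<Rightarrow> (nat \<times> nat) set" where
  "step_idx N s = {(r, l). r = s \<and> 1 \<le> l \<and> l \<le> N s}"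

definition before_idx :: "(nat \<Rightarrow> nat) \<Rightarrow> nat \<Rightarrow> (nat \<times> nat) set" where
  "before_idx N s = {(r, l). 1 \<le> r \<and> r < s \<and> 1 \<le> l \<and> l \<le> N r}"

definition upto_idx :: "(nat \<Rightarrow> nat) \<Rightarrow> nat \<Rightarrow> (nat \<times> nat) set" where
  "upto_idx N s = {(r, l). 1 \<le> r \<and> r \<le> s \<and> 1 \<le> l \<and> l \<le> N r}"

definition viol :: "'w measure \<Rightarrow> ('y \<Rightarrow> 'w set) \<Rightarrow> 'y \<Rightarrow> real" where
  "viol P G y = 1 - measure P (G y)"

end

theory Submission
  imports Defs
begin

text \<open>
  If the procedure stops at step s with a bad output, then the point y^s, which depends only on
  earlier samples, has P(G(y^s)) \<le> 1 - \<epsilon>, and all N_s fresh samples, being independent of it,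
  landed in G(y^s). Fubini for the product of the past and the present block of samples bounds
  the probability of this by (1 - \<epsilon>)^N_s \<le> exp(-\<epsilon> N_s) \<le> \<delta>/\<kappa>_s, and a union bound over s
  gives at most \<delta> \<Sum>_s 1/\<kappa>_s \<le> \<delta>.
\<close>

lemma one_minus_power_le_inverse:
  fixes e c :: real and n :: nat
  assumes "0 \<le> e" "e \<le> 1" "0 < c" "ln c \<le> n * e"
  shows "(1 - e) ^ n \<le> 1 / c"
proof -
  have "(1 - e) ^ n \<le> exp (- e) ^ n"
    using assms(2) exp_ge_add_one_self[of "- e"] by (intro power_mono) auto
  also have "\<dots> = exp (- (n * e))"
    by (simp add: exp_of_nat_mult[symmetric])
  also have "\<dots> \<le> exp (- ln c)"
    using assms(4) by simp
  also have "\<dots> = 1 / c"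
    using assms(3) by (simp add: exp_minus inverse_eq_divide)
  finally show ?thesis .
qed

lemma pred_mem_section:
  assumes A: "{(y, w). y \<in> space M \<and> w \<in> G y} \<in> sets (M \<Otimes>\<^sub>M P)"
    and g: "g \<in> X \<rightarrow>\<^sub>M M" and h: "h \<in> X \<rightarrow>\<^sub>M P"
  shows "Measurable.pred X (\<lambda>x. h x \<in> G (g x))"
proof -
  have "Measurable.pred X (\<lambda>x. (g x, h x) \<in> {(y, w). y \<in> space M \<and> w \<in> G y})"
    using g h by (intro pred_sets2[OF A]) measurable
  moreover have "x \<in> space X \<Longrightarrow> (g x, h x) \<in> {(y, w). y \<in> space M \<and> w \<in> G y} \<longleftrightarrow> h x \<in> G (g x)"
    for x using measurable_space[OF g] by auto
  ultimately show ?thesis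
    by (simp cong: measurable_cong)
qed

lemma viol_borel_measurable:
  assumes "prob_space P"
    and A: "{(y, w). y \<in> space M \<and> w \<in> G y} \<in> sets (M \<Otimes>\<^sub>M P)"
  shows "viol P G \<in> borel_measurable M"
proof -
  interpret P: prob_space P by fact
  have "(\<lambda>y. emeasure P (Pair y -` {(y, w). y \<in> space M \<and> w \<in> G y})) \<in> borel_measurable M"
    by (rule P.measurable_emeasure_Pair[OF A])
  then have "(\<lambda>y. 1 - enn2real (emeasure P (Pair y -` {(y, w). y \<in> space M \<and> w \<in> G y})))
      \<in> borel_measurable M"
    by measurable
  then show ?thesis
    by (rule measurable_cong[THEN iffD1, rotated]) (simp add: viol_def measure_def)
qed

lemma distr_PiM_restrict_disjoint_pair:
  assumes M: "\<And>i. prob_space (M i)"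
    and fin: "finite A" "finite B" and disj: "A \<inter> B = {}"
  shows "distr (PiM UNIV M) (PiM A M \<Otimes>\<^sub>M PiM B M) (\<lambda>\<omega>. (restrict \<omega> A, restrict \<omega> B))
    = PiM A M \<Otimes>\<^sub>M PiM B M"
proof -
  interpret PiM: product_prob_space M UNIV
    using M by (simp add: product_prob_space_def product_prob_space_axioms_def
        product_sigma_finite_def prob_space_imp_sigma_finite)
  have "PiM.indep_vars M (\<lambda>i \<omega>. \<omega> i) UNIV"
    by (subst PiM.indep_vars_iff_distr_eq_PiM) (simp_all add: PiM.PiM_component restrict_UNIV)
  then have "PiM.indep_var (PiM A M) (\<lambda>\<omega>. restrict \<omega> A) (PiM B M) (\<lambda>\<omega>. restrict \<omega> B)"
    using PiM.indep_var_restrict[OF _ disj, of M "\<lambda>i \<omega>. \<omega> i"] by simp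
  then show ?thesis
    using fin by (simp add: PiM.indep_var_distribution_eq PiM.distr_PiM_restrict_finite)
qed

lemma emeasure_PiM_accept_violated_le:
  fixes P :: "'w measure" and f :: "('i \<Rightarrow> 'w) \<Rightarrow> 'y"
  assumes P: "prob_space P"
    and A: "{(y, w). y \<in> space M \<and> w \<in> G y} \<in> sets (M \<Otimes>\<^sub>M P)"
    and fin: "finite B" "finite S" and disj: "B \<inter> S = {}"
    and f: "f \<in> PiM B (\<lambda>_. P) \<rightarrow>\<^sub>M M"
  shows "emeasure (PiM UNIV (\<lambda>_. P)) {\<omega> \<in> space (PiM UNIV (\<lambda>_. P)).
      (\<forall>i\<in>S. \<omega> i \<in> G (f (restrict \<omega> B))) \<and> eps \<le> viol P G (f (restrict \<omega> B))}
    \<le> ennreal ((1 - eps) ^ card S)"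
proof -
  interpret P: prob_space P by fact
  interpret PP: product_sigma_finite "\<lambda>_. P"
    by (simp add: product_sigma_finite_def P.sigma_finite_measure_axioms)
  interpret PB: prob_space "PiM B (\<lambda>_. P)" by (rule prob_space_PiM) (rule P)
  interpret PS: prob_space "PiM S (\<lambda>_. P)" by (rule prob_space_PiM) (rule P)
  let ?PB = "PiM B (\<lambda>_. P)" and ?PS = "PiM S (\<lambda>_. P)"
  define Q where "Q = {p \<in> space (?PB \<Otimes>\<^sub>M ?PS).
      (\<forall>i\<in>S. snd p i \<in> G (f (fst p))) \<and> eps \<le> viol P G (f (fst p))}"
  have G_sets: "G y \<in> sets P" if "y \<in> space M" for y
  proof -
    have "Pair y -` {(y, w). y \<in> space M \<and> w \<in> G y} = G y"
      using that by auto
    then show ?thesis using sets_Pair1[OF A, of y] by simp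
  qed
  have "Measurable.pred (?PB \<Otimes>\<^sub>M ?PS) (\<lambda>p. snd p i \<in> G (f (fst p)))" if "i \<in> S" for i
    using pred_mem_section[OF A measurable_compose[OF measurable_fst f]
        measurable_compose[OF measurable_snd measurable_component_singleton[OF that]]] .
  moreover have "Measurable.pred (?PB \<Otimes>\<^sub>M ?PS) (\<lambda>p. eps \<le> viol P G (f (fst p)))"
    using measurable_compose[OF f viol_borel_measurable[OF P A]] by measurable
  ultimately have "Measurable.pred (?PB \<Otimes>\<^sub>M ?PS)
      (\<lambda>p. (\<forall>i\<in>S. snd p i \<in> G (f (fst p))) \<and> eps \<le> viol P G (f (fst p)))"
    using fin by measurable
  then have Q: "Q \<in> sets (?PB \<Otimes>\<^sub>M ?PS)"
    unfolding Q_def pred_def .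
  have split: "(\<lambda>\<omega>. (restrict \<omega> B, restrict \<omega> S)) \<in> PiM UNIV (\<lambda>_. P) \<rightarrow>\<^sub>M ?PB \<Otimes>\<^sub>M ?PS"
    by measurable
  have "emeasure (PiM UNIV (\<lambda>_. P)) {\<omega> \<in> space (PiM UNIV (\<lambda>_. P)).
      (\<forall>i\<in>S. \<omega> i \<in> G (f (restrict \<omega> B))) \<and> eps \<le> viol P G (f (restrict \<omega> B))}
    = emeasure (distr (PiM UNIV (\<lambda>_. P)) (?PB \<Otimes>\<^sub>M ?PS) (\<lambda>\<omega>. (restrict \<omega> B, restrict \<omega> S))) Q"
  proof -
    have "{\<omega> \<in> space (PiM UNIV (\<lambda>_. P)).
        (\<forall>i\<in>S. \<omega> i \<in> G (f (restrict \<omega> B))) \<and> eps \<le> viol P G (f (restrict \<omega> B))}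
      = (\<lambda>\<omega>. (restrict \<omega> B, restrict \<omega> S)) -` Q \<inter> space (PiM UNIV (\<lambda>_. P))"
      using measurable_space[OF split] by (auto simp: Q_def)
    then show ?thesis by (simp add: emeasure_distr[OF split Q])
  qed
  also have "\<dots> = emeasure (?PB \<Otimes>\<^sub>M ?PS) Q"
    using fin disj P by (simp add: distr_PiM_restrict_disjoint_pair)
  also have "\<dots> = (\<integral>\<^sup>+x. emeasure ?PS (Pair x -` Q) \<partial>?PB)"
    by (rule PS.emeasure_pair_measure_alt[OF Q])
  also have "\<dots> \<le> (\<integral>\<^sup>+x. ennreal ((1 - eps) ^ card S) \<partial>?PB)"
  proof (rule nn_integral_mono)
    fix x assume x: "x \<in> space ?PB"
    then have fx: "f x \<in> space M" using measurable_space[OF f] by blast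
    show "emeasure ?PS (Pair x -` Q) \<le> ennreal ((1 - eps) ^ card S)"
    proof (cases "eps \<le> viol P G (f x)")
      case True
      have "G (f x) \<subseteq> space P" using sets.sets_into_space[OF G_sets[OF fx]] .
      then have "Pair x -` Q = PiE S (\<lambda>_. G (f x))"
        using x True by (auto simp: Q_def space_pair_measure space_PiM PiE_iff extensional_def)
      then have "emeasure ?PS (Pair x -` Q) = ennreal (measure P (G (f x)) ^ card S)"
        using G_sets[OF fx] fin
        by (simp add: PP.emeasure_PiM P.emeasure_eq_measure prod_ennreal ennreal_power)
      also have "\<dots> \<le> ennreal ((1 - eps) ^ card S)"
        using True by (intro ennreal_leI power_mono) (auto simp: viol_def)
      finally show ?thesis .
    qed (simp add: Q_def)
  qed
  also have "\<dots> = ennreal ((1 - eps) ^ card S)"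
    by (simp add: PB.emeasure_space_1)
  finally show ?thesis .
qed

lemma step_idx_eq_image: "step_idx N s = Pair s ` {1..N s}"
  by (auto simp: step_idx_def)

lemma finite_step_idx [simp]: "finite (step_idx N s)"
  by (simp add: step_idx_eq_image)

lemma card_step_idx [simp]: "card (step_idx N s) = N s"
  by (simp add: step_idx_eq_image card_image inj_on_def)

lemma finite_before_idx [simp]: "finite (before_idx N s)"
proof -
  have "before_idx N s = Sigma {1..<s} (\<lambda>r. {1..N r})" by (auto simp: before_idx_def)
  then show ?thesis by simp
qed

lemma before_idx_Int_step_idx [simp]: "before_idx N s \<inter> step_idx N s = {}"
  by (auto simp: before_idx_def step_idx_def)

lemma measure_PiM_step_accept_violated_le:
  fixes P :: "'w measure" and f :: "((nat \<times> nat) \<Rightarrow> 'w) \<Rightarrow> 'y"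
  assumes P: "prob_space P"
    and A: "{(y, w). y \<in> space M \<and> w \<in> G y} \<in> sets (M \<Otimes>\<^sub>M P)"
    and f: "f \<in> PiM (before_idx N s) (\<lambda>_. P) \<rightarrow>\<^sub>M M"
    and eps: "0 < eps" "eps < 1" and pos: "0 < delta" "0 < kappa"
    and N_ge: "ln (kappa / delta) / eps \<le> N s"
  shows "measure (PiM UNIV (\<lambda>_. P)) {\<omega> \<in> space (PiM UNIV (\<lambda>_. P)).
      (\<forall>i\<in>step_idx N s. \<omega> i \<in> G (f (restrict \<omega> (before_idx N s))))
      \<and> eps \<le> viol P G (f (restrict \<omega> (before_idx N s)))} \<le> delta / kappa"
proof -
  interpret prob_space "PiM UNIV (\<lambda>_. P)" by (rule prob_space_PiM) (rule P)
  have "(1 - eps) ^ N s \<le> 1 / (kappa / delta)"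
    using eps pos N_ge by (intro one_minus_power_le_inverse) (auto simp: pos_divide_le_eq mult.commute)
  then show ?thesis
    using emeasure_PiM_accept_violated_le[OF P A finite_before_idx finite_step_idx
        before_idx_Int_step_idx f, of eps] eps
    by (simp add: emeasure_eq_measure)
qed

lemma (in finite_measure) finite_measure_le_suminf_of_subset_Union:
  assumes A: "range A \<subseteq> sets M" and X: "X \<subseteq> (\<Union>i. A i)"
    and le: "\<And>i. measure M (A i) \<le> b i" and b: "summable b"
  shows "measure M X \<le> (\<Sum>i. b i)"
proof -
  have summable_A: "summable (\<lambda>i. measure M (A i))"
    using le by (intro summable_comparison_test[OF _ b]) auto
  have "measure M X \<le> measure M (\<Union>i. A i)"
    using A X by (intro finite_measure_mono) auto
  also have "\<dots> \<le> (\<Sum>i. measure M (A i))"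
    by (rule finite_measure_subadditive_countably[OF A summable_A])
  also have "\<dots> \<le> (\<Sum>i. b i)"
    using le by (intro suminf_le summable_A b)
  finally show ?thesis .
qed

theorem mainTheorem4:
  fixes P :: "'w measure"
    and Y :: "(real ^ 'n) set"
    and G :: "real ^ 'n \<Rightarrow> 'w set"
    and eps delta :: real
    and kappa :: "nat \<Rightarrow> real"
    and N :: "nat \<Rightarrow> nat"
    and f :: "nat \<Rightarrow> ((nat \<times> nat) \<Rightarrow> 'w) \<Rightarrow> real ^ 'n"
    and H :: "nat \<Rightarrow> ((nat \<times> nat) \<Rightarrow> 'w) set"
  assumes P: "prob_space P"
    and G_meas: "\<And>y. y \<in> Y \<Longrightarrow> G y \<in> sets P"
    and G_joint: "{(y, w). y \<in> Y \<and> w \<in> G y} \<in> sets (restrict_space borel Y \<Otimes>\<^sub>M P)"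
    and eps: "0 < eps" "eps < 1"
    and delta: "0 < delta" "delta < 1"
    and kappa_pos: "\<And>s. 1 \<le> s \<Longrightarrow> 0 < kappa s"
    and kappa_summable: "summable (\<lambda>s. 1 / kappa (Suc s))"
    and kappa_sum: "(\<Sum>s. 1 / kappa (Suc s)) \<le> 1"
    and N_ge: "\<And>s. 1 \<le> s \<Longrightarrow> real (N s) \<ge> ln (kappa s / delta) / eps"
    and f_meas: "\<And>s. 1 \<le> s \<Longrightarrow>
        f s \<in> PiM (before_idx N s) (\<lambda>_. P) \<rightarrow>\<^sub>M restrict_space borel Y"
    and H_meas: "\<And>s. 1 \<le> s \<Longrightarrow> H s \<in> sets (PiM (upto_idx N s) (\<lambda>_. P))"
  defines "E \<equiv> {\<omega> \<in> space (PiM UNIV (\<lambda>_::nat \<times> nat. P)).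
              \<exists>s \<ge> 1. (\<forall>r. 1 \<le> r \<and> r < s \<longrightarrow>
                         \<not> (\<forall>i \<in> step_idx N r. \<omega> i \<in> G (f r (restrict \<omega> (before_idx N r)))) \<and> restrict \<omega> (upto_idx N r) \<notin> H r)
                    \<and> (\<forall>i \<in> step_idx N s. \<omega> i \<in> G (f s (restrict \<omega> (before_idx N s)))) \<and> viol P G (f s (restrict \<omega> (before_idx N s))) \<ge> eps}"
  shows "E \<in> sets (PiM UNIV (\<lambda>_::nat \<times> nat. P)) \<and>
         measure (PiM UNIV (\<lambda>_::nat \<times> nat. P)) E \<le> delta"
proof -
  let ?M = "PiM UNIV (\<lambda>_::nat \<times> nat. P)"
  interpret M: prob_space ?M by (rule prob_space_PiM) (rule P)
  define RY where "RY = restrict_space (borel :: (real ^ 'n) measure) Y"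
  have G_RY: "{(y, w). y \<in> space RY \<and> w \<in> G y} \<in> sets (RY \<Otimes>\<^sub>M P)"
    using G_joint by (simp add: RY_def space_restrict_space)
  define y where "y s \<omega> = f s (restrict \<omega> (before_idx N s))" for s \<omega>
  define Es where "Es s = {\<omega> \<in> space ?M. (\<forall>i\<in>step_idx N s. \<omega> i \<in> G (y s \<omega>))
      \<and> eps \<le> viol P G (y s \<omega>)}" for s
  have y: "y s \<in> ?M \<rightarrow>\<^sub>M RY" if "1 \<le> s" for s
    unfolding y_def RY_def using that
    by (intro measurable_compose[OF measurable_restrict_subset f_meas]) auto
  have accepts: "Measurable.pred ?M (\<lambda>\<omega>. \<forall>i\<in>step_idx N s. \<omega> i \<in> G (y s \<omega>))" if "1 \<le> s" for s
    using pred_mem_section[OF G_RY y[OF that] measurable_component_singleton] by measurable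
  have violates: "Measurable.pred ?M (\<lambda>\<omega>. eps \<le> viol P G (y s \<omega>))" if "1 \<le> s" for s
    using measurable_compose[OF y[OF that] viol_borel_measurable[OF P G_RY]] by measurable
  have halts: "Measurable.pred ?M (\<lambda>\<omega>. restrict \<omega> (upto_idx N s) \<in> H s)" if "1 \<le> s" for s
    using that by (intro pred_sets2[OF H_meas measurable_restrict_subset]) auto
  have E_eq: "E = {\<omega> \<in> space ?M. \<exists>s \<ge> 1. (\<forall>r. 1 \<le> r \<and> r < s \<longrightarrow>
      \<not> (\<forall>i \<in> step_idx N r. \<omega> i \<in> G (y r \<omega>)) \<and> restrict \<omega> (upto_idx N r) \<notin> H r)
      \<and> (\<forall>i \<in> step_idx N s. \<omega> i \<in> G (y s \<omega>)) \<and> eps \<le> viol P G (y s \<omega>)}"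
    unfolding E_def y_def ..
  have E_sets: "E \<in> sets ?M"
    unfolding E_eq using accepts violates halts by measurable
  have Es_le: "measure ?M (Es s) \<le> delta / kappa s" if s: "1 \<le> s" for s
    using measure_PiM_step_accept_violated_le[OF P G_RY f_meas[folded RY_def, OF s] eps delta(1)
        kappa_pos[OF s] N_ge[OF s]]
    by (simp add: Es_def y_def)
  have "E \<subseteq> (\<Union>s. Es (Suc s))"
    unfolding E_eq Es_def by (fastforce dest: Suc_le_D)
  moreover have "range (\<lambda>s. Es (Suc s)) \<subseteq> sets ?M"
    using accepts violates by (auto simp: Es_def)
  moreover have "summable (\<lambda>s. delta / kappa (Suc s))"
    using summable_mult[OF kappa_summable, of delta] by simp
  ultimately have "measure ?M E \<le> (\<Sum>s. delta / kappa (Suc s))"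
    using Es_le by (intro M.finite_measure_le_suminf_of_subset_Union) auto
  also have "\<dots> = delta * (\<Sum>s. 1 / kappa (Suc s))"
    using suminf_mult[OF kappa_summable, of delta] by simp
  also have "\<dots> \<le> delta"
    using kappa_sum delta by (simp add: mult_left_le)
  finally show ?thesis
    using E_sets by simp
qed

end
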